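(* In the three-door Monty Hall game described in the context, let $Q$ be a fully supported mixed strategy of Monte, and let $\pi_\theta=Q(\{(\theta,d):d\neq\theta\})$ for $\theta\in\{1,2,3\}$. Then every pure Bayesian strategy for $Q$ is always-switching, so every Bayesian strategy for $Q$ is a mixture of always-switching strategies. Moreover, if (after relabeling the doors) $\pi_1\ge\pi_2\ge\pi_3>0$, the pure Bayesian strategies are exactly: (1) $3\,\mathrm{s}\,\mathrm{s}$ alone if $\pi_1\ge\pi_2>\pi_3$; (2) $2\,\mathrm{s}\,\mathrm{s}$ and $3\,\mathrm{s}\,\mathrm{s}$ if $\pi_1>\pi_2=\pi_3$; (3) $1\,\mathrm{s}\,\mathrm{s}$, $2\,\mathrm{s}\,\mathrm{s}$ and $3\,\mathrm{s}\,\mathrm{s}$ if $\pi_1=\pi_2=\pi_3=1/3$.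
   Context: Doors are numbered $1,2,3$. A pure strategy of Monte is a pair $(\theta,d)$ with $\theta\in\{1,2,3\}$ (the door hiding the prize) and $d\in\{1,2,3\}\setminus\{\theta\}$ (six strategies). A pure strategy of Conie is a triple $x\,a\,b$ with $x\in\{1,2,3\}$ and $a,b\in\{\mathrm{h},\mathrm{s}\}$ (twelve strategies). Under the profile $((\theta,d),x\,a\,b)$: Monte offers door $y=\theta$ if $x\neq\theta$ and $y=d$ if $x=\theta$; Conie's action is $a$ if $y$ is the smaller of the two doors in $\{1,2,3\}\setminus\{x\}$ and $b$ otherwise; her final choice is $z=x$ for action $\mathrm{h}$ and $z=y$ for action $\mathrm{s}$; she wins (payoff 1) iff $z=\theta$, else payoff 0. Strategies $x\,\mathrm{s}\,\mathrm{s}$ are always-switching. A mixed strategy is a probability distribution on pure strategies; it is fully supported if every pure strategy has positive probability. For a mixed strategy $Q$ of Monte, a (mixed) strategy $P$ of Conie is Bayesian if it maximizes Conie's winning probability $\sum_{A,S}P(A)Q(S)C(A,S)$ over all mixed strategies of Conie (with $P$, $Q$ independent); a pure Bayesian strategy is a pure strategy with this property. *)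

theory Defs
  imports Complex_Main
begin

definition doors :: "nat set" where "doors = {1,2,3}"

datatype act = Hold | Switch

type_synonym monte_strat = "nat \<times> nat"
type_synonym conie_strat = "nat \<times> act \<times> act"

definition monte_strats :: "monte_strat set" where
  "monte_strats = {(\<theta>, d). \<theta> \<in> doors \<and> d \<in> doors - {\<theta>}}"

definition conie_strats :: "conie_strat set" where
  "conie_strats = {(x, a, b). x \<in> doors}"

definition offered :: "monte_strat \<Rightarrow> nat \<Rightarrow> nat" where
  "offered S x = (if x \<noteq> fst S then fst S else snd S)"

definition conie_action :: "conie_strat \<Rightarrow> nat \<Rightarrow> act" where
  "conie_action A y = (case A of (x, a, b) \<Rightarrow>
      if y = Min (doors - {x}) then a else b)"

definition final_choice :: "conie_strat \<Rightarrow> monte_strat \<Rightarrow> nat" where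
  "final_choice A S = (let x = fst A; y = offered S x in
      if conie_action A y = Hold then x else y)"

definition payoff :: "conie_strat \<Rightarrow> monte_strat \<Rightarrow> real" where
  "payoff A S = (if final_choice A S = fst S then 1 else 0)"

definition mixed :: "'s set \<Rightarrow> ('s \<Rightarrow> real) \<Rightarrow> bool" where
  "mixed M P \<longleftrightarrow> (\<forall>s. 0 \<le> P s) \<and> (\<forall>s. s \<notin> M \<longrightarrow> P s = 0) \<and> sum P M = 1"

definition fully_supported :: "'s set \<Rightarrow> ('s \<Rightarrow> real) \<Rightarrow> bool" where
  "fully_supported M P \<longleftrightarrow> mixed M P \<and> (\<forall>s\<in>M. 0 < P s)"

definition win_prob :: "(conie_strat \<Rightarrow> real) \<Rightarrow> (monte_strat \<Rightarrow> real) \<Rightarrow> real" where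
  "win_prob P Q = (\<Sum>A\<in>conie_strats. \<Sum>S\<in>monte_strats. P A * Q S * payoff A S)"

definition bayesian :: "(monte_strat \<Rightarrow> real) \<Rightarrow> (conie_strat \<Rightarrow> real) \<Rightarrow> bool" where
  "bayesian Q P \<longleftrightarrow> mixed conie_strats P \<and>
     (\<forall>P'. mixed conie_strats P' \<longrightarrow> win_prob P' Q \<le> win_prob P Q)"

definition pure :: "conie_strat \<Rightarrow> conie_strat \<Rightarrow> real" where
  "pure A = (\<lambda>B. if B = A then 1 else 0)"

definition pure_bayesian :: "(monte_strat \<Rightarrow> real) \<Rightarrow> conie_strat \<Rightarrow> bool" where
  "pure_bayesian Q A \<longleftrightarrow> A \<in> conie_strats \<and> bayesian Q (pure A)"

definition always_switching :: "conie_strat \<Rightarrow> bool" where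
  "always_switching A \<longleftrightarrow> fst (snd A) = Switch \<and> snd (snd A) = Switch"

definition prize_prob :: "(monte_strat \<Rightarrow> real) \<Rightarrow> nat \<Rightarrow> real" where
  "prize_prob Q \<theta> = (\<Sum>d\<in>doors - {\<theta>}. Q (\<theta>, d))"

end

theory Submission imports Defs begin

text \<open>With first pick \<open>x\<close> and remaining doors \<open>y, z\<close>, the pure strategy \<open>x a b\<close> collects, for
  each offer \<open>y\<close>, the weight \<open>Q(x, y)\<close> if it holds and \<open>\<pi>\<^sub>y\<close> if it switches. Holding on
  \<open>y\<close> is strictly beaten by \<open>y s s\<close>, which wins with weight \<open>\<pi>\<^sub>x + \<pi>\<^sub>z\<close>: holding on both
  offers wins \<open>\<pi>\<^sub>x\<close>, and otherwise the hold contributes only \<open>Q(x, y) < \<pi>\<^sub>x\<close> by full support.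
  Since \<open>x s s\<close> wins with weight \<open>1 - \<pi>\<^sub>x\<close>, the best pure strategies are the \<open>x s s\<close> with
  \<open>\<pi>\<^sub>x\<close> minimal, and a Bayesian mixed strategy can only charge best pure strategies.\<close>

lemma mixed_finite: "mixed M P \<Longrightarrow> finite M"
  by (metis mixed_def sum.infinite zero_neq_one)

lemma mixed_expectation_le:
  fixes v :: "'s \<Rightarrow> real"
  assumes "mixed M P" and "\<forall>B\<in>M. v B \<le> c"
  shows "(\<Sum>B\<in>M. P B * v B) \<le> c"
proof -
  have "(\<Sum>B\<in>M. P B * v B) \<le> (\<Sum>B\<in>M. P B * c)"
    using assms by (intro sum_mono mult_left_mono) (auto simp: mixed_def)
  also have "\<dots> = c"
    using assms(1) by (simp add: mixed_def sum_distrib_right[symmetric])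
  finally show ?thesis .
qed

lemma mixed_support_maximizes:
  fixes v :: "'s \<Rightarrow> real"
  assumes mixed: "mixed M P" and best: "\<forall>B\<in>M. v B \<le> (\<Sum>C\<in>M. P C * v C)"
    and A: "A \<in> M" "0 < P A"
  shows "\<forall>B\<in>M. v B \<le> v A"
proof
  fix B assume "B \<in> M"
  have fin: "finite M" using mixed by (rule mixed_finite)
  define m where "m = Max (v ` M)"
  have le_m: "v C \<le> m" if "C \<in> M" for C
    unfolding m_def using fin that by simp
  have "m \<in> v ` M" unfolding m_def using fin A(1) by (intro Max_in) auto
  then have "m \<le> (\<Sum>C\<in>M. P C * v C)" using best by blast
  then have "(\<Sum>C\<in>M. P C * (m - v C)) \<le> 0"
    using mixed by (simp add: mixed_def right_diff_distrib sum_subtractf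
        sum_distrib_right[symmetric])
  moreover have nonneg: "\<forall>C\<in>M. 0 \<le> P C * (m - v C)"
    using mixed le_m by (simp add: mixed_def)
  ultimately have "\<forall>C\<in>M. P C * (m - v C) = 0"
    using fin sum_nonneg_eq_0_iff sum_nonneg by (metis (no_types, lifting) order_antisym)
  then have "v A = m" using A by fastforce
  then show "v B \<le> v A" using le_m \<open>B \<in> M\<close> by simp
qed

definition win_value :: "(monte_strat \<Rightarrow> real) \<Rightarrow> conie_strat \<Rightarrow> real" where
  "win_value Q A = (\<Sum>S\<in>monte_strats. Q S * payoff A S)"

lemma win_prob_eq_expectation: "win_prob P Q = (\<Sum>A\<in>conie_strats. P A * win_value Q A)"
  unfolding win_prob_def win_value_def by (simp add: sum_distrib_left mult.assoc)

lemma conie_strats_finite: "finite conie_strats"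
proof -
  have "(UNIV :: act set) = {Hold, Switch}"
    using act.exhaust by blast
  then have "conie_strats = doors \<times> {Hold, Switch} \<times> {Hold, Switch}"
    by (auto simp: conie_strats_def)
  then show ?thesis by (metis doors_def finite.emptyI finite_insert finite_cartesian_product)
qed

lemma mixed_pure: "A \<in> conie_strats \<Longrightarrow> mixed conie_strats (pure A)"
  unfolding mixed_def pure_def by (simp add: conie_strats_finite)

lemma win_prob_pure: "A \<in> conie_strats \<Longrightarrow> win_prob (pure A) Q = win_value Q A"
  unfolding win_prob_eq_expectation pure_def
  by (simp add: conie_strats_finite if_distrib[of "\<lambda>c. c * _"] cong: if_cong)

lemma pure_bayesian_iff_maximizes:
  "pure_bayesian Q A \<longleftrightarrow> A \<in> conie_strats \<and> (\<forall>B\<in>conie_strats. win_value Q B \<le> win_value Q A)"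
proof
  assume "pure_bayesian Q A"
  then show "A \<in> conie_strats \<and> (\<forall>B\<in>conie_strats. win_value Q B \<le> win_value Q A)"
    unfolding pure_bayesian_def bayesian_def by (metis mixed_pure win_prob_pure)
next
  assume "A \<in> conie_strats \<and> (\<forall>B\<in>conie_strats. win_value Q B \<le> win_value Q A)"
  then show "pure_bayesian Q A"
    unfolding pure_bayesian_def bayesian_def
    by (metis mixed_pure win_prob_pure win_prob_eq_expectation mixed_expectation_le)
qed

lemma bayesian_support_pure_bayesian:
  assumes "bayesian Q P" "A \<in> conie_strats" "0 < P A"
  shows "pure_bayesian Q A"
proof -
  have "\<forall>B\<in>conie_strats. win_value Q B \<le> (\<Sum>C\<in>conie_strats. P C * win_value Q C)"
    using assms(1) by (metis bayesian_def mixed_pure win_prob_pure win_prob_eq_expectation)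
  then show ?thesis
    using assms mixed_support_maximizes[of conie_strats P "win_value Q" A]
    by (simp add: bayesian_def pure_bayesian_iff_maximizes)
qed

lemma monte_strats_enum: "monte_strats = {(1,2), (1,3), (2,1), (2,3), (3,1), (3,2)}"
  by (auto simp: monte_strats_def doors_def)

lemma doors_cases:
  assumes "doors = {x, y, z}" "distinct [x, y, z]" "y < z"
  shows "(x, y, z) \<in> {(1,2,3), (2,1,3), (3,1,2)}"
proof -
  have "x \<in> {1,2,3}" "y \<in> {1,2,3}" "z \<in> {1,2,3}"
    using assms(1) unfolding doors_def by blast+
  then show ?thesis using assms(2,3) by auto
qed

lemma door_complement:
  assumes "x \<in> doors"
  obtains y z where "doors = {x, y, z}" "distinct [x, y, z]" "y < z"
proof -
  have "x = 1 \<or> x = 2 \<or> x = 3" using assms by (simp add: doors_def)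
  then show ?thesis
  proof (elim disjE)
    assume "x = 1" then show ?thesis by (intro that[of 2 3]) (auto simp: doors_def)
  next
    assume "x = 2" then show ?thesis by (intro that[of 1 3]) (auto simp: doors_def)
  next
    assume "x = 3" then show ?thesis by (intro that[of 1 2]) (auto simp: doors_def)
  qed
qed

lemma prize_prob_split:
  assumes "doors = {x, y, z}" "distinct [x, y, z]"
  shows "prize_prob Q x = Q (x, y) + Q (x, z)"
proof -
  have "doors - {x} = {y, z}" using assms by auto
  then show ?thesis using assms(2) by (simp add: prize_prob_def)
qed

text \<open>With first pick \<open>x\<close> and action \<open>a\<close> on being offered \<open>y\<close>, Conie wins with the offer
  \<open>y\<close> exactly when she holds and the play is \<open>(x, y)\<close>, or switches and the prize is behind \<open>y\<close>
  (Monte then has to offer \<open>y\<close>).\<close>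
definition offer_gain :: "(monte_strat \<Rightarrow> real) \<Rightarrow> nat \<Rightarrow> nat \<Rightarrow> act \<Rightarrow> real" where
  "offer_gain Q x y a = (if a = Hold then Q (x, y) else prize_prob Q y)"

lemma win_value_eq_offer_gains:
  assumes "doors = {x, y, z}" "distinct [x, y, z]" "y < z"
  shows "win_value Q (x, a, b) = offer_gain Q x y a + offer_gain Q x z b"
  using doors_cases[OF assms]
  by (cases a; cases b; auto simp: win_value_def monte_strats_enum offer_gain_def payoff_def
      final_choice_def offered_def conie_action_def prize_prob_def doors_def insert_Diff_if)

lemma win_value_always_switching:
  assumes "x \<in> doors"
  shows "win_value Q (x, Switch, Switch) = (\<Sum>w\<in>doors. prize_prob Q w) - prize_prob Q x"
proof -
  obtain y z where yz: "doors = {x, y, z}" "distinct [x, y, z]" "y < z"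
    using assms by (rule door_complement)
  then have "win_value Q (x, Switch, Switch) = prize_prob Q y + prize_prob Q z"
    by (simp add: win_value_eq_offer_gains offer_gain_def)
  then show ?thesis unfolding yz(1) using yz(2) by simp
qed

lemma prize_prob_pos:
  assumes "\<forall>s\<in>monte_strats. 0 < Q s" "x \<in> doors"
  shows "0 < prize_prob Q x"
proof -
  obtain y z where xyz: "doors = {x, y, z}" "distinct [x, y, z]"
    using assms(2) by (rule door_complement)
  then have "0 < Q (x, y)" "0 < Q (x, z)"
    using assms(1) by (auto simp: monte_strats_def)
  then show ?thesis using prize_prob_split[OF xyz] by simp
qed

lemma holding_loses:
  assumes pos: "\<forall>s\<in>monte_strats. 0 < Q s" and xyz: "doors = {x, y, z}" "distinct [x, y, z]"
  shows "offer_gain Q x y Hold + offer_gain Q x z c < win_value Q (y, Switch, Switch)"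
proof -
  have yxz: "doors = {y, x, z}" "distinct [y, x, z]" using xyz by auto
  have "win_value Q (y, Switch, Switch) = (\<Sum>w\<in>doors. prize_prob Q w) - prize_prob Q y"
    using yxz(1) by (intro win_value_always_switching) auto
  also have "\<dots> = prize_prob Q x + prize_prob Q z"
    unfolding yxz(1) using yxz(2) by simp
  finally have "win_value Q (y, Switch, Switch) = prize_prob Q x + prize_prob Q z" .
  moreover have "0 < Q (x, z)" "0 < prize_prob Q z"
    using pos xyz prize_prob_pos[OF pos, of z] by (auto simp: monte_strats_def)
  ultimately show ?thesis
    using prize_prob_split[OF xyz, of Q] by (cases c) (simp_all add: offer_gain_def)
qed

lemma not_always_switching_dominated:
  assumes pos: "\<forall>s\<in>monte_strats. 0 < Q s"
    and A: "A \<in> conie_strats" "\<not> always_switching A"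
  shows "\<exists>w\<in>doors. win_value Q A < win_value Q (w, Switch, Switch)"
proof -
  obtain x a b where A_eq: "A = (x, a, b)" by (cases A)
  have "x \<in> doors" using A A_eq by (simp add: conie_strats_def)
  then obtain y z where xyz: "doors = {x, y, z}" "distinct [x, y, z]" "y < z"
    by (rule door_complement)
  have xzy: "doors = {x, z, y}" "distinct [x, z, y]" using xyz by auto
  have gains: "win_value Q A = offer_gain Q x y a + offer_gain Q x z b"
    using A_eq xyz by (simp add: win_value_eq_offer_gains)
  have "a = Hold \<or> b = Hold"
    using A A_eq act.exhaust by (auto simp: always_switching_def)
  then show ?thesis
  proof
    assume "a = Hold"
    then show ?thesis using gains holding_loses[OF pos xyz(1,2)] xyz(1) by auto
  next
    assume "b = Hold"
    then show ?thesis using gains holding_loses[OF pos xzy] xyz(1) by (auto simp: add.commute)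
  qed
qed

lemma pure_bayesian_iff_min_prize_prob:
  assumes pos: "\<forall>s\<in>monte_strats. 0 < Q s"
  shows "pure_bayesian Q A \<longleftrightarrow>
    (\<exists>x\<in>doors. A = (x, Switch, Switch) \<and> (\<forall>w\<in>doors. prize_prob Q x \<le> prize_prob Q w))"
proof
  assume "pure_bayesian Q A"
  then have A: "A \<in> conie_strats" and max: "\<forall>B\<in>conie_strats. win_value Q B \<le> win_value Q A"
    by (auto simp: pure_bayesian_iff_maximizes)
  have "always_switching A"
  proof (rule ccontr)
    assume "\<not> always_switching A"
    then obtain w where "w \<in> doors" "win_value Q A < win_value Q (w, Switch, Switch)"
      using not_always_switching_dominated[OF pos A(1)] by blast
    then show False
      using max[rule_format, of "(w, Switch, Switch)"] by (simp add: conie_strats_def)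
  qed
  then obtain x where x: "x \<in> doors" "A = (x, Switch, Switch)"
    using A by (auto simp: always_switching_def conie_strats_def)
  have "prize_prob Q x \<le> prize_prob Q w" if "w \<in> doors" for w
    using max[rule_format, of "(w, Switch, Switch)"] that x
    by (simp add: conie_strats_def win_value_always_switching)
  then show "\<exists>x\<in>doors. A = (x, Switch, Switch) \<and> (\<forall>w\<in>doors. prize_prob Q x \<le> prize_prob Q w)"
    using x by blast
next
  assume "\<exists>x\<in>doors. A = (x, Switch, Switch) \<and> (\<forall>w\<in>doors. prize_prob Q x \<le> prize_prob Q w)"
  then obtain x where x: "x \<in> doors" "A = (x, Switch, Switch)"
    and min: "\<forall>w\<in>doors. prize_prob Q x \<le> prize_prob Q w" by blast
  have switch_le: "win_value Q (w, Switch, Switch) \<le> win_value Q A" if "w \<in> doors" for w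
    using min that x by (simp add: win_value_always_switching)
  have "win_value Q B \<le> win_value Q A" if B: "B \<in> conie_strats" for B
  proof (cases "always_switching B")
    case True
    then show ?thesis
      using B switch_le by (auto simp: always_switching_def conie_strats_def)
  next
    case False
    then show ?thesis
      using not_always_switching_dominated[OF pos B] switch_le by force
  qed
  then show "pure_bayesian Q A"
    using x by (simp add: pure_bayesian_iff_maximizes conie_strats_def)
qed

lemma pure_bayesian_set_sorted:
  assumes "\<forall>s\<in>monte_strats. 0 < Q s" "doors = {i, j, k}"
    "prize_prob Q k \<le> prize_prob Q j" "prize_prob Q j \<le> prize_prob Q i"
  shows "{A. pure_bayesian Q A} =
    (\<lambda>x. (x, Switch, Switch)) ` {x \<in> {i, j, k}. prize_prob Q x = prize_prob Q k}"
  using assms(3,4) unfolding pure_bayesian_iff_min_prize_prob[OF assms(1)] assms(2) by force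

lemma prize_prob_sum: "mixed monte_strats Q \<Longrightarrow> (\<Sum>\<theta>\<in>doors. prize_prob Q \<theta>) = 1"
proof -
  assume "mixed monte_strats Q"
  moreover have "monte_strats = Sigma doors (\<lambda>\<theta>. doors - {\<theta>})"
    by (auto simp: monte_strats_def)
  ultimately show ?thesis
    by (simp add: mixed_def prize_prob_def sum.Sigma doors_def)
qed

theorem mainTheorem3:
  fixes Q :: "monte_strat \<Rightarrow> real"
  assumes "fully_supported monte_strats Q"
  shows "(\<forall>A. pure_bayesian Q A \<longrightarrow> always_switching A)
   \<and> (\<forall>P. bayesian Q P \<longrightarrow> (\<forall>A\<in>conie_strats. 0 < P A \<longrightarrow> always_switching A))
   \<and> (\<forall>i j k. {i, j, k} = doors \<and> distinct [i, j, k] \<and>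
         prize_prob Q i \<ge> prize_prob Q j \<and> prize_prob Q j \<ge> prize_prob Q k \<longrightarrow>
       (prize_prob Q j > prize_prob Q k \<longrightarrow>
          {A. pure_bayesian Q A} = {(k, Switch, Switch)})
     \<and> (prize_prob Q i > prize_prob Q j \<and> prize_prob Q j = prize_prob Q k \<longrightarrow>
          {A. pure_bayesian Q A} = {(j, Switch, Switch), (k, Switch, Switch)})
     \<and> (prize_prob Q i = prize_prob Q j \<and> prize_prob Q j = prize_prob Q k \<longrightarrow>
          prize_prob Q i = 1/3 \<and>
          {A. pure_bayesian Q A} = {(1, Switch, Switch), (2, Switch, Switch), (3, Switch, Switch)}))"
proof -
  have pos: "\<forall>s\<in>monte_strats. 0 < Q s" and sum1: "(\<Sum>\<theta>\<in>doors. prize_prob Q \<theta>) = 1"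
    using assms prize_prob_sum by (auto simp: fully_supported_def)
  have pure: "\<forall>A. pure_bayesian Q A \<longrightarrow> always_switching A"
    by (auto simp: pure_bayesian_iff_min_prize_prob[OF pos] always_switching_def)
  show ?thesis
  proof (intro conjI pure allI impI ballI)
    fix P A assume "bayesian Q P" "A \<in> conie_strats" "0 < P A"
    then show "always_switching A" using pure bayesian_support_pure_bayesian by blast
  next
    fix i j k
    assume "{i, j, k} = doors \<and> distinct [i, j, k] \<and>
      prize_prob Q i \<ge> prize_prob Q j \<and> prize_prob Q j \<ge> prize_prob Q k"
    then have doors: "doors = {i, j, k}" and "distinct [i, j, k]"
      and ord: "prize_prob Q k \<le> prize_prob Q j" "prize_prob Q j \<le> prize_prob Q i"
      by auto
    note set = pure_bayesian_set_sorted[OF pos doors ord]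
    show "prize_prob Q j > prize_prob Q k \<Longrightarrow> {A. pure_bayesian Q A} = {(k, Switch, Switch)}"
      using ord unfolding set by auto
    show "prize_prob Q i > prize_prob Q j \<and> prize_prob Q j = prize_prob Q k \<Longrightarrow>
        {A. pure_bayesian Q A} = {(j, Switch, Switch), (k, Switch, Switch)}"
      unfolding set by auto
    assume eq: "prize_prob Q i = prize_prob Q j \<and> prize_prob Q j = prize_prob Q k"
    then show "prize_prob Q i = 1/3"
      using sum1 \<open>distinct [i, j, k]\<close> unfolding doors by simp
    have "{A. pure_bayesian Q A} = (\<lambda>x. (x, Switch, Switch)) ` doors"
      using eq unfolding set doors by auto
    then show "{A. pure_bayesian Q A} = {(1, Switch, Switch), (2, Switch, Switch), (3, Switch, Switch)}"
      by (simp add: doors_def)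
  qed
qed

end
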